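(* Let $G$ be a bipartite permutation graph and let $I$ and $J$ be maximum independent sets of $G$. Suppose that there is a reconfiguration sequence between $I$ and $J$. Then there is a reconfiguration sequence of length $|I\setminus J|$ between $I$ and $J$.
   Context: A graph $G=(V,E)$ with $V=[n]$ is a permutation graph if there is a permutation $\pi:[n]\to[n]$ such that for $1\le i<j\le n$, $\{i,j\}\in E$ iff $\pi(i)>\pi(j)$. A reconfiguration sequence between independent sets $I$ and $J$ (with $|I|=|J|$) is a sequence of independent sets $I_0=I,I_1,\dots,I_\ell=J$ such that for each $1\le i\le \ell$, $I_i\setminus I_{i-1}=\{v\}$ and $I_{i-1}\setminus I_i=\{u\}$ for some vertices $u,v$; its length is $\ell$. *)

theory Defs
  imports Main
begin

definition perm_edge :: "(nat \<Rightarrow> nat) \<Rightarrow> nat \<Rightarrow> nat \<Rightarrow> bool" where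
  "perm_edge \<pi> u v \<longleftrightarrow> (u < v \<and> \<pi> u > \<pi> v) \<or> (v < u \<and> \<pi> v > \<pi> u)"

definition is_perm :: "nat \<Rightarrow> (nat \<Rightarrow> nat) \<Rightarrow> bool" where
  "is_perm n \<pi> \<longleftrightarrow> bij_betw \<pi> {1..n} {1..n}"

definition bipartite_graph :: "nat set \<Rightarrow> (nat \<Rightarrow> nat \<Rightarrow> bool) \<Rightarrow> bool" where
  "bipartite_graph V E \<longleftrightarrow> (\<exists>A B. A \<union> B = V \<and> A \<inter> B = {} \<and>
      (\<forall>u\<in>V. \<forall>v\<in>V. E u v \<longrightarrow> (u \<in> A \<longleftrightarrow> v \<in> B)))"

definition indep_set :: "nat set \<Rightarrow> (nat \<Rightarrow> nat \<Rightarrow> bool) \<Rightarrow> nat set \<Rightarrow> bool" where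
  "indep_set V E I \<longleftrightarrow> I \<subseteq> V \<and> (\<forall>u\<in>I. \<forall>v\<in>I. \<not> E u v)"

definition max_indep_set :: "nat set \<Rightarrow> (nat \<Rightarrow> nat \<Rightarrow> bool) \<Rightarrow> nat set \<Rightarrow> bool" where
  "max_indep_set V E I \<longleftrightarrow> indep_set V E I \<and>
      (\<forall>K. indep_set V E K \<longrightarrow> card K \<le> card I)"

definition reconf_seq :: "nat set \<Rightarrow> (nat \<Rightarrow> nat \<Rightarrow> bool) \<Rightarrow> nat set list \<Rightarrow> nat set \<Rightarrow> nat set \<Rightarrow> bool" where
  "reconf_seq V E S I J \<longleftrightarrow> S \<noteq> [] \<and> hd S = I \<and> last S = J \<and>
      (\<forall>K\<in>set S. indep_set V E K) \<and>
      (\<forall>i. Suc i < length S \<longrightarrow>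
         (\<exists>u v. S ! Suc i - S ! i = {v} \<and> S ! i - S ! Suc i = {u}))"

definition reconf_length :: "nat set list \<Rightarrow> nat" where
  "reconf_length S = length S - 1"

end

theory Submission
  imports Defs
begin

text \<open>Two non-adjacent vertices of a permutation graph are comparable in the product order of
  positions and values, so an independent set is a chain; a vertex with r smaller vertices in
  the set has rank r in it. Gluing the part of one maximum independent set up to x with the part of another
  from y on, for x below y, shows that the rank of x is smaller than that of y, even when the two
  ranks are taken in different maximum independent sets.
  Hence a vertex has the same rank in every maximum independent set containing it, and distinct
  vertices of equal rank are adjacent; in a triangle-free graph each rank therefore has at most
  two candidates, and a token jump always swaps the two candidates of one rank.

  If I and J differ, take ranks where they disagree. Either at one of them the vertex of J fits
  between the neighbouring vertices of I, and swapping it in brings I one step closer to J; or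
  two consecutive disagreeing ranks cross, and then neither of the two tokens of I can ever move,
  so J is unreachable. Repeating the swap reaches J in card (I - J) steps.

  That \<pi> is a permutation is never used: equal values behave like non-edges.\<close>

section \<open>Ranks in finite sets of naturals\<close>

definition rank :: "nat set \<Rightarrow> nat \<Rightarrow> nat" where
  "rank K z = card {w\<in>K. w < z}"

definition unrank :: "nat set \<Rightarrow> nat \<Rightarrow> nat" where
  "unrank K = the_inv_into K (rank K)"

lemma rank_strict_mono:
  assumes "finite K" "a \<in> K" "a < b"
  shows "rank K a < rank K b"
  unfolding rank_def by (rule psubset_card_mono) (use assms in auto)

lemma rank_less_card: "finite K \<Longrightarrow> z \<in> K \<Longrightarrow> rank K z < card K"
  unfolding rank_def by (rule psubset_card_mono) auto

lemma rank_less_rank_iff: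
  assumes "finite K" "a \<in> K" "b \<in> K"
  shows "rank K a < rank K b \<longleftrightarrow> a < b"
  using rank_strict_mono[OF assms(1,2)] rank_strict_mono[OF assms(1,3)]
  by (metis less_asym' linorder_neqE_nat)

lemma inj_on_rank: "finite K \<Longrightarrow> inj_on (rank K) K"
  by (metis inj_onI less_irrefl linorder_neqE_nat rank_strict_mono)

lemma bij_betw_rank: "finite K \<Longrightarrow> bij_betw (rank K) K {..<card K}"
proof -
  assume K: "finite K"
  have "rank K ` K \<subseteq> {..<card K}" using rank_less_card[OF K] by auto
  moreover have "card (rank K ` K) = card {..<card K}"
    using card_image[OF inj_on_rank[OF K]] by simp
  ultimately show ?thesis
    using inj_on_rank[OF K] by (simp add: bij_betw_def card_subset_eq)
qed

lemma unrank_in: "finite K \<Longrightarrow> r < card K \<Longrightarrow> unrank K r \<in> K"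
  unfolding unrank_def using bij_betw_rank
  by (metis bij_betw_def lessThan_iff the_inv_into_into order_refl)

lemma rank_unrank: "finite K \<Longrightarrow> r < card K \<Longrightarrow> rank K (unrank K r) = r"
  unfolding unrank_def using bij_betw_rank by (metis bij_betw_def lessThan_iff f_the_inv_into_f)

lemma unrank_rank: "finite K \<Longrightarrow> z \<in> K \<Longrightarrow> unrank K (rank K z) = z"
  unfolding unrank_def by (simp add: inj_on_rank the_inv_into_f_f)

lemma rank_eq_imp_eq: "finite K \<Longrightarrow> a \<in> K \<Longrightarrow> b \<in> K \<Longrightarrow> rank K a = rank K b \<Longrightarrow> a = b"
  using inj_on_rank by (metis inj_onD)

lemma card_le_eq_Suc_rank: "finite K \<Longrightarrow> x \<in> K \<Longrightarrow> card {w\<in>K. w \<le> x} = Suc (rank K x)"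
proof -
  assume "finite K" "x \<in> K"
  moreover have "{w\<in>K. w \<le> x} = insert x {w\<in>K. w < x}" using \<open>x \<in> K\<close> by auto
  ultimately show ?thesis by (simp add: rank_def)
qed

lemma card_ge_eq_diff_rank: "finite K \<Longrightarrow> card {w\<in>K. y \<le> w} = card K - rank K y"
proof -
  assume "finite K"
  moreover have "{w\<in>K. y \<le> w} = K - {w\<in>K. w < y}" by auto
  ultimately show ?thesis by (simp add: rank_def card_Diff_subset)
qed

lemma eq_if_unrank_eq:
  assumes "finite K" "finite K'" "card K = card K'" "\<And>i. i < card K \<Longrightarrow> unrank K i = unrank K' i"
  shows "K = K'"
proof -
  have "z \<in> K'" if "finite K" "finite K'" "card K = card K'" "z \<in> K"
    "\<And>i. i < card K \<Longrightarrow> unrank K i = unrank K' i" for K K' z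
    using that unrank_rank[of K z] rank_less_card[of K z] unrank_in[of K' "rank K z"] by simp
  then show ?thesis using assms by (metis subsetI subset_antisym)
qed

section \<open>Token jumps and independent sets\<close>

definition token_jump :: "nat set \<Rightarrow> nat set \<Rightarrow> bool" where
  "token_jump K K' \<longleftrightarrow> (\<exists>u v. K' - K = {v} \<and> K - K' = {u})"

lemma card_token_jump: "token_jump K K' \<Longrightarrow> card K' = card K"
proof -
  assume "token_jump K K'"
  then obtain u v where "K' - K = {v}" "K - K' = {u}" unfolding token_jump_def by blast
  then have K': "K' = insert v (K - {u})" and "v \<notin> K" "u \<in> K" by blast+
  show ?thesis
  proof (cases "finite K")
    case True
    moreover have "card K > 0" using True \<open>u \<in> K\<close> card_gt_0_iff by blast
    ultimately show ?thesis using K' \<open>v \<notin> K\<close> \<open>u \<in> K\<close> by simp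
  next
    case False
    then show ?thesis using K' by simp
  qed
qed

lemma reconf_seq_ConsI:
  assumes S: "reconf_seq V E S K' J" and "indep_set V E K" "token_jump K K'"
  shows "reconf_seq V E (K # S) K J"
  unfolding reconf_seq_def
proof (intro conjI allI impI)
  show "K # S \<noteq> []" "hd (K # S) = K" by simp_all
  show "last (K # S) = J" "\<forall>K\<in>set (K # S). indep_set V E K"
    using S \<open>indep_set V E K\<close> unfolding reconf_seq_def by auto
  fix i assume "Suc i < length (K # S)"
  then show "\<exists>u v. (K # S) ! Suc i - (K # S) ! i = {v} \<and> (K # S) ! i - (K # S) ! Suc i = {u}"
    using S \<open>token_jump K K'\<close> unfolding reconf_seq_def token_jump_def
    by (cases i) (auto simp: hd_conv_nth)
qed

lemma reconf_seq_singleton: "indep_set V E I \<Longrightarrow> reconf_seq V E [I] I I"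
  unfolding reconf_seq_def by simp

lemma reconf_length_Cons: "S \<noteq> [] \<Longrightarrow> reconf_length (K # S) = Suc (reconf_length S)"
  unfolding reconf_length_def by simp

lemma reconf_seq_invariant:
  assumes S: "reconf_seq V E S I J" and "P I"
    and step: "\<And>K K'. P K \<Longrightarrow> indep_set V E K' \<Longrightarrow> token_jump K K' \<Longrightarrow> P K'"
  shows "P J"
proof -
  have "P (S ! j)" if "j < length S" for j
    using that
  proof (induction j)
    case 0
    then show ?case using S \<open>P I\<close> unfolding reconf_seq_def by (metis hd_conv_nth)
  next
    case (Suc j)
    then show ?case
      using S step[of "S ! j" "S ! Suc j"] unfolding reconf_seq_def token_jump_def by auto
  qed
  then show ?thesis
    using S unfolding reconf_seq_def
    by (metis last_conv_nth diff_less length_greater_0_conv zero_less_one)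
qed

definition triangle_free :: "nat set \<Rightarrow> (nat \<Rightarrow> nat \<Rightarrow> bool) \<Rightarrow> bool" where
  "triangle_free V E \<longleftrightarrow> (\<forall>a\<in>V. \<forall>b\<in>V. \<forall>c\<in>V. \<not> (E a b \<and> E b c \<and> E a c))"

lemma bipartite_graph_triangle_free: "bipartite_graph V E \<Longrightarrow> triangle_free V E"
  unfolding bipartite_graph_def triangle_free_def by blast

lemma indep_set_finite: "finite V \<Longrightarrow> indep_set V E K \<Longrightarrow> finite K"
  unfolding indep_set_def using finite_subset by blast

lemma indep_set_insert:
  assumes "indep_set V E K" "b \<in> V" "\<not> E b b" "\<And>v. v \<in> K \<Longrightarrow> \<not> E b v \<and> \<not> E v b"
  shows "indep_set V E (insert b K)"
  using assms unfolding indep_set_def by blast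

lemma indep_set_Diff: "indep_set V E K \<Longrightarrow> indep_set V E (K - A)"
  unfolding indep_set_def by blast

lemma max_indep_set_card_eq: "max_indep_set V E K \<Longrightarrow> max_indep_set V E K' \<Longrightarrow> card K = card K'"
  unfolding max_indep_set_def by (meson le_antisym)

lemma max_indep_set_token_jump:
  "max_indep_set V E K \<Longrightarrow> indep_set V E K' \<Longrightarrow> token_jump K K' \<Longrightarrow> max_indep_set V E K'"
  unfolding max_indep_set_def using card_token_jump by metis

section \<open>Maximum independent sets of permutation graphs\<close>

definition precedes :: "(nat \<Rightarrow> nat) \<Rightarrow> nat \<Rightarrow> nat \<Rightarrow> bool" where
  "precedes \<pi> a b \<longleftrightarrow> a < b \<and> \<pi> a \<le> \<pi> b"

lemma precedes_trans: "precedes \<pi> a b \<Longrightarrow> precedes \<pi> b c \<Longrightarrow> precedes \<pi> a c"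
  unfolding precedes_def by auto

lemma perm_edge_commute: "perm_edge \<pi> a b \<longleftrightarrow> perm_edge \<pi> b a"
  unfolding perm_edge_def by auto

lemma perm_edge_irrefl: "\<not> perm_edge \<pi> a a"
  unfolding perm_edge_def by auto

lemma precedes_imp_not_perm_edge: "precedes \<pi> a b \<Longrightarrow> \<not> perm_edge \<pi> a b"
  unfolding precedes_def perm_edge_def by auto

lemma not_perm_edge_imp_precedes:
  "a \<noteq> b \<Longrightarrow> \<not> perm_edge \<pi> a b \<Longrightarrow> precedes \<pi> a b \<or> precedes \<pi> b a"
  unfolding precedes_def perm_edge_def by auto

lemma indep_set_less_imp_precedes:
  "indep_set V (perm_edge \<pi>) K \<Longrightarrow> a \<in> K \<Longrightarrow> b \<in> K \<Longrightarrow> a < b \<Longrightarrow> precedes \<pi> a b"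
  unfolding indep_set_def precedes_def perm_edge_def by fastforce

lemma indep_set_glue:
  assumes K: "indep_set V (perm_edge \<pi>) K" and K': "indep_set V (perm_edge \<pi>) K'"
    and "x \<in> K" "y \<in> K'" "precedes \<pi> x y"
  shows "indep_set V (perm_edge \<pi>) ({w\<in>K. w \<le> x} \<union> {w\<in>K'. y \<le> w})"
proof -
  have "precedes \<pi> u v" if "u \<in> K" "u \<le> x" "v \<in> K'" "y \<le> v" for u v
  proof -
    have "u = x \<or> precedes \<pi> u x"
      using indep_set_less_imp_precedes[OF K] that \<open>x \<in> K\<close> by force
    moreover have "y = v \<or> precedes \<pi> y v"
      using indep_set_less_imp_precedes[OF K'] that \<open>y \<in> K'\<close> by force
    ultimately show ?thesis using \<open>precedes \<pi> x y\<close> precedes_trans by metis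
  qed
  then show ?thesis
    using K K' precedes_imp_not_perm_edge perm_edge_commute unfolding indep_set_def by blast
qed

locale perm_graph =
  fixes V :: "nat set" and \<pi> :: "nat \<Rightarrow> nat"
  assumes finite_V: "finite V"
begin

abbreviation "edge \<equiv> perm_edge \<pi>"
abbreviation "indep \<equiv> indep_set V edge"
abbreviation "maxindep \<equiv> max_indep_set V edge"

lemma maxindep_indep: "maxindep K \<Longrightarrow> indep K"
  unfolding max_indep_set_def by blast

lemma maxindep_finite: "maxindep K \<Longrightarrow> finite K"
  using indep_set_finite[OF finite_V] maxindep_indep by blast

lemma maxindep_subset: "maxindep K \<Longrightarrow> K \<subseteq> V"
  unfolding max_indep_set_def indep_set_def by blast

lemma maxindep_no_edge: "maxindep K \<Longrightarrow> a \<in> K \<Longrightarrow> b \<in> K \<Longrightarrow> \<not> edge a b"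
  unfolding max_indep_set_def indep_set_def by blast

lemma rank_less_of_precedes:
  assumes K: "maxindep K" and K': "maxindep K'" and x: "x \<in> K" and y: "y \<in> K'"
    and "precedes \<pi> x y"
  shows "rank K x < rank K' y"
proof -
  let ?C = "{w\<in>K. w \<le> x} \<union> {w\<in>K'. y \<le> w}"
  have "card ?C \<le> card K"
    using K indep_set_glue[OF maxindep_indep[OF K] maxindep_indep[OF K'] x y \<open>precedes \<pi> x y\<close>]
    unfolding max_indep_set_def by blast
  moreover have "card ?C = Suc (rank K x) + (card K' - rank K' y)"
    using card_Un_disjoint[of "{w\<in>K. w \<le> x}" "{w\<in>K'. y \<le> w}"] \<open>precedes \<pi> x y\<close>
      maxindep_finite[OF K] maxindep_finite[OF K'] card_le_eq_Suc_rank[OF _ x]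
      card_ge_eq_diff_rank[of K' y]
    by (force simp: precedes_def)
  moreover have "rank K' y < card K'" using rank_less_card[OF maxindep_finite[OF K'] y] .
  ultimately show ?thesis using max_indep_set_card_eq[OF K K'] by linarith
qed

lemma unrank_maxindep:
  assumes "maxindep I" "maxindep K" "i < card I"
  shows "unrank K i \<in> K" "rank K (unrank K i) = i"
  using assms unrank_in rank_unrank maxindep_finite max_indep_set_card_eq by metis+

lemma rank_le_imp_precedes:
  assumes K: "maxindep K" and "u \<in> K" "v \<in> K" "u \<noteq> v" "rank K u \<le> rank K v"
  shows "precedes \<pi> u v"
proof -
  have "rank K u < rank K v" using rank_eq_imp_eq[OF maxindep_finite[OF K]] assms(2-5) by fastforce
  then have "u < v" using rank_less_rank_iff[OF maxindep_finite[OF K] assms(2,3)] by simp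
  then show ?thesis using indep_set_less_imp_precedes[OF maxindep_indep[OF K] assms(2,3)] by simp
qed

lemma rank_le_rank:
  assumes K: "maxindep K" and K': "maxindep K'" and "z \<in> K" "z \<in> K'"
  shows "rank K z \<le> rank K' z"
proof (cases "rank K z = 0")
  case False
  define p where "p = unrank K (rank K z - 1)"
  have r: "rank K z - 1 < card K" using rank_less_card[OF maxindep_finite[OF K] \<open>z \<in> K\<close>] by linarith
  have p: "p \<in> K" "rank K p = rank K z - 1" using unrank_maxindep[OF K K r] p_def by simp_all
  then have "precedes \<pi> p z" using rank_le_imp_precedes[OF K p(1) \<open>z \<in> K\<close>] False by fastforce
  then have "rank K p < rank K' z" by (rule rank_less_of_precedes[OF K K' p(1) \<open>z \<in> K'\<close>])
  then show ?thesis using p(2) by linarith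
qed simp

lemma rank_common:
  "maxindep K \<Longrightarrow> maxindep K' \<Longrightarrow> z \<in> K \<Longrightarrow> z \<in> K' \<Longrightarrow> rank K z = rank K' z"
  using rank_le_rank by (meson le_antisym)

lemma precedes_of_rank_le:
  assumes "maxindep K" "maxindep K'" "x \<in> K" "y \<in> K'" "x \<noteq> y" "\<not> edge x y"
    and "rank K x \<le> rank K' y"
  shows "precedes \<pi> x y"
  using not_perm_edge_imp_precedes[OF assms(5,6)] rank_less_of_precedes[OF assms(2,1,4,3)] assms(7)
  by linarith

lemma same_rank_edge:
  assumes "maxindep K" "maxindep K'" "x \<in> K" "y \<in> K'" "x \<noteq> y" "rank K x = rank K' y"
  shows "edge x y"
proof (rule ccontr)
  assume "\<not> edge x y"
  then have "precedes \<pi> x y" "precedes \<pi> y x"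
    using precedes_of_rank_le[OF assms(1-5)] precedes_of_rank_le[OF assms(2,1,4,3)] assms(5,6)
      perm_edge_commute by simp_all
  then show False unfolding precedes_def by simp
qed

lemma same_rank_notin:
  assumes I: "maxindep I" and J: "maxindep J" and "x \<in> I" "y \<in> J" "x \<noteq> y"
    and "rank I x = rank J y"
  shows "x \<notin> J"
proof
  assume "x \<in> J"
  then have "rank J x = rank J y" using rank_common[OF I J \<open>x \<in> I\<close>] assms(6) by simp
  then show False using rank_eq_imp_eq[OF maxindep_finite[OF J] \<open>x \<in> J\<close> \<open>y \<in> J\<close>] \<open>x \<noteq> y\<close> by simp
qed

lemma rank_token_jump:
  assumes K: "maxindep K" and K': "maxindep K'" and "K - K' = {x}" "K' - K = {v}"
  shows "rank K' v = rank K x"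
proof -
  have r: "rank K x < card K" using rank_less_card[OF maxindep_finite[OF K]] assms(3) by auto
  define w where "w = unrank K' (rank K x)"
  have w: "w \<in> K'" "rank K' w = rank K x" using unrank_maxindep[OF K K' r] w_def by simp_all
  have "w = v"
  proof (rule ccontr)
    assume "w \<noteq> v"
    then have "w \<in> K" using w(1) assms(4) by blast
    then have "rank K w = rank K x" using rank_common[OF K K' _ w(1)] w(2) by simp
    then have "w = x" using rank_eq_imp_eq[OF maxindep_finite[OF K] \<open>w \<in> K\<close>] assms(3) by blast
    then show False using w(1) assms(3) by blast
  qed
  then show ?thesis using w(2) by simp
qed

text \<open>The two non-adjacency conditions make the vertex of J of rank i follow every vertex of I
  of smaller rank and precede every vertex of I of larger rank.\<close>

lemma indep_swap_unrank:
  assumes I: "maxindep I" and J: "maxindep J" and i: "i < card I"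
    and differ: "unrank I i \<noteq> unrank J i"
    and left: "i = 0 \<or> \<not> edge (unrank I (i - 1)) (unrank J i)"
    and right: "Suc i = card I \<or> \<not> edge (unrank J i) (unrank I (Suc i))"
  shows "indep (insert (unrank J i) (I - {unrank I i}))"
proof -
  define a b where "a = unrank I i" and "b = unrank J i"
  have a: "a \<in> I" "rank I a = i" using unrank_maxindep[OF I I i] a_def by simp_all
  have b: "b \<in> J" "rank J b = i" using unrank_maxindep[OF I J i] b_def by simp_all
  have bI: "b \<notin> I" using same_rank_notin[OF J I b(1) a(1)] a b differ a_def b_def by simp
  have below: "precedes \<pi> v b" if v: "v \<in> I" "rank I v < i" for v
  proof -
    define c where "c = unrank I (i - 1)"
    have c: "c \<in> I" "rank I c = i - 1" using unrank_maxindep[OF I I, of "i - 1"] i c_def by simp_all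
    have "\<not> edge c b" using left v(2) c_def b_def by auto
    then have "precedes \<pi> c b" using precedes_of_rank_le[OF I J c(1) b(1)] c b bI by auto
    moreover have "v = c \<or> precedes \<pi> v c"
      using rank_le_imp_precedes[OF I v(1) c(1)] c(2) v(2) by fastforce
    ultimately show ?thesis using precedes_trans by blast
  qed
  have above: "precedes \<pi> b v" if v: "v \<in> I" "i < rank I v" for v
  proof -
    define d where "d = unrank I (Suc i)"
    have di: "Suc i < card I" using rank_less_card[OF maxindep_finite[OF I] v(1)] v(2) by simp
    have d: "d \<in> I" "rank I d = Suc i" using unrank_maxindep[OF I I di] d_def by simp_all
    have "\<not> edge b d" using right di d_def b_def by auto
    then have "precedes \<pi> b d" using precedes_of_rank_le[OF J I b(1) d(1)] b d bI by auto
    moreover have "d = v \<or> precedes \<pi> d v"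
      using rank_le_imp_precedes[OF I d(1) v(1)] d(2) v(2) by fastforce
    ultimately show ?thesis using precedes_trans by blast
  qed
  have "\<not> edge b v \<and> \<not> edge v b" if "v \<in> I - {a}" for v
  proof -
    have "rank I v \<noteq> i" using that a rank_eq_imp_eq[OF maxindep_finite[OF I]] by blast
    then have "precedes \<pi> v b \<or> precedes \<pi> b v"
      using that below above by (meson DiffD1 linorder_neqE_nat)
    then show ?thesis using precedes_imp_not_perm_edge perm_edge_commute by blast
  qed
  moreover have "b \<in> V" using maxindep_subset[OF J] b(1) by blast
  ultimately show ?thesis
    unfolding a_def[symmetric] b_def[symmetric]
    using indep_set_insert[OF indep_set_Diff[OF maxindep_indep[OF I]]] perm_edge_irrefl by blast
qed

end

section \<open>Reconfiguration in triangle-free permutation graphs\<close>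

locale triangle_free_perm_graph = perm_graph +
  assumes triangle_free: "triangle_free V (perm_edge \<pi>)"
begin

lemma same_rank_cases:
  assumes "maxindep K\<^sub>1" "maxindep K\<^sub>2" "maxindep K\<^sub>3" "x\<^sub>1 \<in> K\<^sub>1" "x\<^sub>2 \<in> K\<^sub>2" "x\<^sub>3 \<in> K\<^sub>3"
    and "rank K\<^sub>1 x\<^sub>1 = rank K\<^sub>2 x\<^sub>2" "rank K\<^sub>1 x\<^sub>1 = rank K\<^sub>3 x\<^sub>3"
  shows "x\<^sub>1 = x\<^sub>2 \<or> x\<^sub>1 = x\<^sub>3 \<or> x\<^sub>2 = x\<^sub>3"
proof (rule ccontr)
  assume "\<not> ?thesis"
  then have "edge x\<^sub>1 x\<^sub>2" "edge x\<^sub>2 x\<^sub>3" "edge x\<^sub>1 x\<^sub>3"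
    using same_rank_edge[OF assms(1,2,4,5)] same_rank_edge[OF assms(2,3,5,6)]
      same_rank_edge[OF assms(1,3,4,6)] assms(7,8) by simp_all
  moreover have "x\<^sub>1 \<in> V" "x\<^sub>2 \<in> V" "x\<^sub>3 \<in> V"
    using assms(1-6) maxindep_subset by blast+
  ultimately show False using triangle_free unfolding triangle_free_def by blast
qed

lemma token_jump_counterpart:
  assumes I: "maxindep I" and J: "maxindep J" and K: "maxindep K" and K': "maxindep K'"
    and "K - K' = {x}" "K' - K = {v}" and "x \<in> I" "x' \<in> J" "rank I x = rank J x'" "x \<noteq> x'"
  shows "v = x'"
proof -
  have "x \<in> K" "v \<in> K'" "v \<noteq> x" using assms(5,6) by blast+
  have "rank K' v = rank I x"
    using rank_token_jump[OF K K' assms(5,6)] rank_common[OF I K \<open>x \<in> I\<close> \<open>x \<in> K\<close>] by simp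
  then show ?thesis
    using same_rank_cases[OF I J K' \<open>x \<in> I\<close> \<open>x' \<in> J\<close> \<open>v \<in> K'\<close>] assms(9,10) \<open>v \<noteq> x\<close> by auto
qed

lemma token_jump_keeps:
  assumes I: "maxindep I" and J: "maxindep J" and K: "maxindep K" and K': "indep K'"
    and jump: "token_jump K K'"
    and "z \<in> I" "z \<in> K" "z' \<in> J" "rank I z = rank J z'" "z \<noteq> z'"
    and "w \<in> K" "w \<noteq> z" "edge z' w"
  shows "z \<in> K'"
proof (rule ccontr)
  assume "z \<notin> K'"
  obtain u v where uv: "K - K' = {u}" "K' - K = {v}" using jump unfolding token_jump_def by blast
  have "z \<in> K - K'" using \<open>z \<in> K\<close> \<open>z \<notin> K'\<close> by simp
  then have zK: "K - K' = {z}" using uv(1) by simp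
  have "v = z'"
    by (rule token_jump_counterpart[OF I J K max_indep_set_token_jump[OF K K' jump]
          zK uv(2) assms(6,8-10)])
  then have "z' \<in> K'" using uv(2) by auto
  have "w \<notin> K - K'" using zK \<open>w \<noteq> z\<close> by simp
  then have "w \<in> K'" using \<open>w \<in> K\<close> by simp
  then show False using K' \<open>z' \<in> K'\<close> \<open>edge z' w\<close> unfolding indep_set_def by blast
qed

text \<open>Two crossing disagreements block each other: neither token can ever leave.\<close>

lemma crossing_unreachable:
  assumes I: "maxindep I" and J: "maxindep J"
    and "x \<in> I" "y \<in> I" "x \<noteq> y" "x' \<in> J" "y' \<in> J"
    and "rank I x = rank J x'" "rank I y = rank J y'" "x \<noteq> x'" "y \<noteq> y'"
    and "edge x' y" "edge y' x"
  shows "\<not> reconf_seq V edge S I J"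
proof
  assume "reconf_seq V edge S I J"
  then have "maxindep J \<and> x \<in> J \<and> y \<in> J"
  proof (rule reconf_seq_invariant)
    fix K K' assume "maxindep K \<and> x \<in> K \<and> y \<in> K" and K': "indep K'" and jump: "token_jump K K'"
    then have K: "maxindep K" and "x \<in> K" "y \<in> K" by simp_all
    have "x \<in> K'"
      using token_jump_keeps[OF I J K K' jump assms(3) \<open>x \<in> K\<close> assms(6,8,10) \<open>y \<in> K\<close>] assms(5,12)
      by simp
    moreover have "y \<in> K'"
      using token_jump_keeps[OF I J K K' jump assms(4) \<open>y \<in> K\<close> assms(7,9,11) \<open>x \<in> K\<close>] assms(5,13)
      by simp
    ultimately show "maxindep K' \<and> x \<in> K' \<and> y \<in> K'"
      using max_indep_set_token_jump[OF K K' jump] by simp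
  qed (use I assms(3,4) in simp)
  then show False using same_rank_notin[OF I J assms(3,6,10,8)] by simp
qed

lemma disagreement_propagates:
  assumes I: "maxindep I" and J: "maxindep J" and S: "reconf_seq V edge S I J"
    and i: "Suc i < card I" and differ: "unrank I i \<noteq> unrank J i"
    and e: "edge (unrank J i) (unrank I (Suc i))"
  shows "unrank I (Suc i) \<noteq> unrank J (Suc i)" "\<not> edge (unrank I i) (unrank J (Suc i))"
proof -
  have i': "i < card I" using i by simp
  note x = unrank_maxindep[OF I I i'] and y = unrank_maxindep[OF I I i]
  note x' = unrank_maxindep[OF I J i'] and y' = unrank_maxindep[OF I J i]
  have "unrank I (Suc i) \<notin> J" using e maxindep_no_edge[OF J] x'(1) by blast
  then show differ': "unrank I (Suc i) \<noteq> unrank J (Suc i)" using y'(1) by auto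
  show "\<not> edge (unrank I i) (unrank J (Suc i))"
  proof
    assume "edge (unrank I i) (unrank J (Suc i))"
    then have e': "edge (unrank J (Suc i)) (unrank I i)" using perm_edge_commute by simp
    have "unrank I i \<noteq> unrank I (Suc i)" using x(2) y(2) by (metis n_not_Suc_n)
    from crossing_unreachable[OF I J x(1) y(1) this x'(1) y'(1) _ _ differ differ' e e']
    show False using S x(2) y(2) x'(2) y'(2) by simp
  qed
qed

text \<open>The largest disagreeing rank satisfying the left condition of a swap also satisfies the
  right one, as otherwise the next rank would be a larger such rank.\<close>

lemma exists_improving_swap:
  assumes I: "maxindep I" and J: "maxindep J" and "I \<noteq> J" and S: "reconf_seq V edge S I J"
  shows "\<exists>a\<in>I - J. \<exists>b\<in>J - I. indep (insert b (I - {a}))"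
proof -
  define D where "D = {i. i < card I \<and> unrank I i \<noteq> unrank J i}"
  define L where "L = {i\<in>D. i = 0 \<or> \<not> edge (unrank I (i - 1)) (unrank J i)}"
  have finD: "finite D" and finL: "finite L" unfolding D_def L_def by simp_all
  have "D \<noteq> {}"
  proof
    assume "D = {}"
    then have "unrank I i = unrank J i" if "i < card I" for i using that unfolding D_def by blast
    then show False
      using eq_if_unrank_eq[OF maxindep_finite[OF I] maxindep_finite[OF J]
          max_indep_set_card_eq[OF I J]] \<open>I \<noteq> J\<close> by blast
  qed
  have "Min D \<in> L"
  proof (cases "Min D = 0")
    case False
    have "Min D \<in> D" using Min_in[OF finD \<open>D \<noteq> {}\<close>] .
    then have m: "Min D < card I" unfolding D_def by simp
    then have m': "Min D - 1 < card I" by linarith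
    have "Min D - 1 \<notin> D" using Min_le[OF finD, of "Min D - 1"] False by linarith
    then have "unrank I (Min D - 1) = unrank J (Min D - 1)" using m' unfolding D_def by simp
    then show ?thesis
      using maxindep_no_edge[OF J unrank_maxindep(1)[OF I J m'] unrank_maxindep(1)[OF I J m]]
        \<open>Min D \<in> D\<close> unfolding L_def by simp
  qed (use Min_in[OF finD \<open>D \<noteq> {}\<close>] in \<open>simp add: L_def\<close>)
  then have "Max L \<in> L" using Max_in[OF finL] by blast
  then obtain i where i: "i \<in> L" "\<And>j. j \<in> L \<Longrightarrow> j \<le> i" using Max_ge[OF finL] by blast
  then have i': "i < card I" "unrank I i \<noteq> unrank J i" unfolding L_def D_def by auto
  have "Suc i = card I \<or> \<not> edge (unrank J i) (unrank I (Suc i))"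
  proof (rule ccontr)
    assume "\<not> ?thesis"
    then have "Suc i \<in> L"
      using disagreement_propagates[OF I J S _ i'(2)] i' unfolding L_def D_def by auto
    then show False using i(2) by fastforce
  qed
  then have "indep (insert (unrank J i) (I - {unrank I i}))"
    using indep_swap_unrank[OF I J i'] i(1) unfolding L_def by blast
  moreover have "unrank I i \<in> I - J" "unrank J i \<in> J - I"
    using same_rank_notin[OF I J unrank_maxindep(1)[OF I I i'(1)] unrank_maxindep(1)[OF I J i'(1)]]
      same_rank_notin[OF J I unrank_maxindep(1)[OF I J i'(1)] unrank_maxindep(1)[OF I I i'(1)]]
      unrank_maxindep[OF I I i'(1)] unrank_maxindep[OF I J i'(1)] i'(2) by auto
  ultimately show ?thesis by blast
qed

lemma reconf_seq_shortest:
  assumes "maxindep I" "maxindep J" "reconf_seq V edge S I J"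
  shows "\<exists>S'. reconf_seq V edge S' I J \<and> reconf_length S' = card (I - J)"
  using assms
proof (induction "card (I - J)" arbitrary: I S)
  case 0
  have finI: "finite I" and finJ: "finite J" using 0(2,3) maxindep_finite by auto
  then have "I \<subseteq> J" using 0(1) by simp
  then have "I = J" using card_subset_eq[OF finJ] max_indep_set_card_eq[OF 0(2,3)] by simp
  moreover have "reconf_length [I] = 0" unfolding reconf_length_def by simp
  ultimately show ?case using reconf_seq_singleton[OF maxindep_indep[OF 0(2)]] 0(1) by metis
next
  case (Suc k)
  then have "I \<noteq> J" by auto
  then obtain a b where ab: "a \<in> I - J" "b \<in> J - I" and I': "indep (insert b (I - {a}))"
    using exists_improving_swap Suc.prems by blast
  define I' where "I' = insert b (I - {a})"
  have "I' - I = {b}" "I - I' = {a}" using ab unfolding I'_def by auto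
  then have "token_jump I I'" "token_jump I' I" unfolding token_jump_def by blast+
  then have "maxindep I'" using max_indep_set_token_jump Suc.prems(1) I' I'_def by blast
  moreover have "I' - J = (I - J) - {a}" using ab unfolding I'_def by auto
  then have "k = card (I' - J)"
    using Suc.hyps(2) ab maxindep_finite[OF Suc.prems(1)] by simp
  moreover have "reconf_seq V edge (I' # S) I' J"
    using reconf_seq_ConsI Suc.prems(3) I' \<open>token_jump I' I\<close> I'_def by blast
  ultimately obtain S' where S': "reconf_seq V edge S' I' J" "reconf_length S' = k"
    using Suc.hyps(1) Suc.prems(2) by blast
  then have "S' \<noteq> []" unfolding reconf_seq_def by simp
  then have "reconf_length (I # S') = card (I - J)"
    using reconf_length_Cons S'(2) Suc.hyps(2) by simp
  then show ?case
    using reconf_seq_ConsI[OF S'(1) maxindep_indep[OF Suc.prems(1)] \<open>token_jump I I'\<close>] by blast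
qed

end

theorem theorem2:
  fixes n :: nat and \<pi> :: "nat \<Rightarrow> nat" and I J :: "nat set"
  assumes "is_perm n \<pi>"
    and "bipartite_graph {1..n} (perm_edge \<pi>)"
    and "max_indep_set {1..n} (perm_edge \<pi>) I"
    and "max_indep_set {1..n} (perm_edge \<pi>) J"
    and "\<exists>S. reconf_seq {1..n} (perm_edge \<pi>) S I J"
  shows "\<exists>S. reconf_seq {1..n} (perm_edge \<pi>) S I J \<and> reconf_length S = card (I - J)"
proof -
  interpret triangle_free_perm_graph "{1..n}" \<pi>
    using bipartite_graph_triangle_free[OF assms(2)] by unfold_locales simp_all
  show ?thesis using reconf_seq_shortest assms(3-5) by blast
qed

end
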